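(* The numbers $P_{1^{-1}2^{1}3^{-1}4^{-1}6^{3}12^{-1}}(n)$, defined by $\sum_{n\ge0}P_{1^{-1}2^{1}3^{-1}4^{-1}6^{3}12^{-1}}(n)q^n=\frac{f_2f_6^3}{f_1f_3f_4f_{12}}$, form a $3$-convolutive sequence.
   Context: $f_i:=(q^i;q^i)_\infty=\prod_{k\ge1}(1-q^{ik})$. A sequence $(a_n)_{n\ge0}$ is $m$-convolutive if $\sum_{n\ge0}a_{mn}q^n=\big(\sum_{n\ge0}a_nq^n\big)^m$. *)

theory Defs
  imports "HOL-Computational_Algebra.Formal_Power_Series"
begin

text \<open>f_i = (q^i;q^i)_infinity = prod_{k>=1} (1 - q^(i k)) as a formal power series.
  The coefficient of q^n is computed from the finite product over k = 1..n, which
  agrees with the infinite product modulo q^(n+1) for i >= 1.\<close>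
definition f_fps :: "nat \<Rightarrow> rat fps" where
  "f_fps i = Abs_fps (\<lambda>n. fps_nth (\<Prod>k\<in>{1..n}. 1 - fps_X ^ (i * k)) n)"

definition P_gen :: "rat fps" where
  "P_gen = f_fps 2 * f_fps 6 ^ 3 * inverse (f_fps 1 * f_fps 3 * f_fps 4 * f_fps 12)"

definition P :: "nat \<Rightarrow> rat" where
  "P n = fps_nth P_gen n"

definition convolutive :: "nat \<Rightarrow> (nat \<Rightarrow> 'a::comm_ring_1) \<Rightarrow> bool" where
  "convolutive m a \<longleftrightarrow> Abs_fps (\<lambda>n. a (m * n)) = (Abs_fps a) ^ m"

end

(*
  The generating function is G(-q) for G = f1 f3 / f2^2 = f3 / psi, where
  psi = f2^2 / f1 = sum_{n >= 0} q^(n(n+1)/2).  Replacing q by -q commutes with the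
  operator U that keeps every third coefficient, so it suffices to show U G = G^3.

  Two instances of the Jacobi triple product (proved from its finite form, the
  q-binomial theorem) give 2 psi = sum_{k in Z} q^(k(k-1)/2) and
  A = f2 f3^2 / (f1 f6) = sum_{k in Z} q^(k(3k-1)/2).  Counting representations yields
  the 3-dissection psi(q) = A(q^3) + x with x supported on exponents = 1 mod 3.  Hence
  1/psi = (a^2 - a x + x^2) / (a^3 + x^3) with a = A(q^3), and the denominator is the
  norm N(psi) = psi(q) psi(w q) psi(w^2 q), w a primitive cube root of unity.  The norm
  is multiplicative, a series in q^3, and N(f_k) = f_(3k)^4 / f_(9k) for k prime to 3;
  so the part of f3/psi supported on multiples of 3 is f3 a^2 / N(psi), which is a
  product of f_3, f_6, f_9, f_18 that simplifies to G(q^3)^3.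

  Identities between infinite products are proved degree by degree: up to degree m,
  f_k agrees with the finite product over 1 <= j <= m of (1 - q^(kj)).
*)
theory Submission
  imports Defs
begin

unbundle fps_syntax

section \<open>Agreement of power series up to a given degree\<close>

definition fps_agree :: "nat \<Rightarrow> 'a::zero fps \<Rightarrow> 'a fps \<Rightarrow> bool" where
  "fps_agree m f g \<longleftrightarrow> (\<forall>k\<le>m. f $ k = g $ k)"

lemma fps_agree_refl [simp]: "fps_agree m f f"
  by (simp add: fps_agree_def)

lemma fps_agree_sym: "fps_agree m f g \<Longrightarrow> fps_agree m g f"
  by (simp add: fps_agree_def)

lemma fps_agree_trans [trans]: "fps_agree m f g \<Longrightarrow> fps_agree m g h \<Longrightarrow> fps_agree m f h"
  by (simp add: fps_agree_def)

lemma fps_eq_if_agree: "(\<And>m. fps_agree m f g) \<Longrightarrow> f = g"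
  by (auto simp: fps_agree_def fps_eq_iff)

lemma fps_agree_add:
  "fps_agree m f f' \<Longrightarrow> fps_agree m g g' \<Longrightarrow> fps_agree m (f + g) (f' + g')"
  by (simp add: fps_agree_def)

lemma fps_agree_diff:
  "fps_agree m f f' \<Longrightarrow> fps_agree m g g' \<Longrightarrow> fps_agree m (f - g) (f' - g' :: 'a::ab_group_add fps)"
  by (simp add: fps_agree_def)

lemma fps_agree_mult:
  fixes f f' g g' :: "'a::comm_ring_1 fps"
  assumes "fps_agree m f f'" "fps_agree m g g'"
  shows "fps_agree m (f * g) (f' * g')"
  unfolding fps_agree_def fps_mult_nth
  using assms by (auto simp: fps_agree_def intro!: sum.cong)

lemma fps_agree_power:
  "fps_agree m f g \<Longrightarrow> fps_agree m (f ^ n) (g ^ n :: 'a::comm_ring_1 fps)"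
  by (induction n) (auto intro: fps_agree_mult)

lemma fps_agree_prod:
  "(\<And>i. i \<in> S \<Longrightarrow> fps_agree m (f i) (g i)) \<Longrightarrow>
     fps_agree m (prod f S) (prod g S :: 'a::comm_ring_1 fps)"
  by (induction S rule: infinite_finite_induct) (auto intro: fps_agree_mult)

lemma fps_agree_sum:
  "(\<And>i. i \<in> S \<Longrightarrow> fps_agree m (f i) (g i)) \<Longrightarrow>
     fps_agree m (sum f S) (sum g S :: 'a::comm_monoid_add fps)"
  by (induction S rule: infinite_finite_induct) (auto intro: fps_agree_add)

lemma fps_agree_inverse:
  fixes f g :: "'a::field fps"
  assumes "fps_agree m f g" "f $ 0 \<noteq> 0"
  shows "fps_agree m (inverse f) (inverse g)"
proof -
  have g0: "g $ 0 \<noteq> 0"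
    using assms by (auto simp: fps_agree_def)
  have "fps_agree m (inverse f * g) (inverse f * f)"
    using assms(1) by (intro fps_agree_mult fps_agree_refl) (rule fps_agree_sym)
  then have "fps_agree m (inverse f * g * inverse g) (1 * inverse g)"
    using inverse_mult_eq_1[OF assms(2)] by (intro fps_agree_mult) simp_all
  then show ?thesis
    using inverse_mult_eq_1'[OF g0] by (simp add: mult.assoc)
qed

lemma fps_eq_mult_inverse: "f * g = h \<Longrightarrow> g $ 0 \<noteq> 0 \<Longrightarrow> f = h * inverse (g :: 'a::field fps)"
  by (metis inverse_mult_eq_1' mult.assoc mult.right_neutral)

lemma fps_agree_X_power_mult: "m < t \<Longrightarrow> fps_agree m (fps_X ^ t * f) 0"
  by (auto simp: fps_agree_def fps_X_power_mult_nth)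

lemma fps_agree_one_minus_X_power:
  "m < t \<Longrightarrow> fps_agree m (1 - fps_X ^ t) (1 :: 'a::comm_ring_1 fps)"
  by (auto simp: fps_agree_def)

lemma fps_agree_prod_subset:
  fixes f :: "'b \<Rightarrow> 'a::comm_ring_1 fps"
  assumes "finite B" "A \<subseteq> B" "\<And>i. i \<in> B - A \<Longrightarrow> fps_agree m (f i) 1"
  shows "fps_agree m (prod f B) (prod f A)"
proof -
  have "fps_agree m (prod f (B - A)) (prod (\<lambda>_. 1) (B - A))"
    using assms(3) by (rule fps_agree_prod)
  then have "fps_agree m (prod f (B - A) * prod f A) (1 * prod f A)"
    by (intro fps_agree_mult) simp_all
  then show ?thesis
    by (simp only: prod.subset_diff[OF assms(2,1), of f] mult_1_left)
qed

section \<open>Euler products\<close>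

lemma prod_group2:
  "(\<Prod>i\<in>{1..2 * (M :: nat)}. h i) = (\<Prod>t<M. h (2 * t + 1) * h (2 * t + 2))"
proof (induction M)
  case (Suc M)
  have "2 * Suc M = Suc (Suc (2 * M))"
    by simp
  then have "(\<Prod>i\<in>{1..2 * Suc M}. h i) = h (2 * M + 2) * (h (2 * M + 1) * (\<Prod>i\<in>{1..2 * M}. h i))"
    by (simp add: prod.nat_ivl_Suc' numeral_2_eq_2 mult_ac)
  also have "\<dots> = (\<Prod>t<Suc M. h (2 * t + 1) * h (2 * t + 2))"
    unfolding Suc.IH by (simp add: mult_ac)
  finally show ?case .
qed simp

lemma prod_group3:
  "(\<Prod>i\<in>{1..3 * (M :: nat)}. h i) = (\<Prod>t<M. h (3 * t + 1) * h (3 * t + 2) * h (3 * t + 3))"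
proof (induction M)
  case (Suc M)
  have "3 * Suc M = Suc (Suc (Suc (3 * M)))"
    by simp
  then have "(\<Prod>i\<in>{1..3 * Suc M}. h i)
      = h (3 * M + 3) * (h (3 * M + 2) * (h (3 * M + 1) * (\<Prod>i\<in>{1..3 * M}. h i)))"
    by (simp add: prod.nat_ivl_Suc' numeral_3_eq_3 mult_ac)
  also have "\<dots> = (\<Prod>t<Suc M. h (3 * t + 1) * h (3 * t + 2) * h (3 * t + 3))"
    unfolding Suc.IH by (simp add: mult_ac)
  finally show ?case .
qed simp

definition euler_prod :: "nat \<Rightarrow> nat \<Rightarrow> 'a::comm_ring_1 fps" where
  "euler_prod k N = (\<Prod>j\<in>{1..N}. 1 - fps_X ^ (k * j))"

lemma euler_prod_nth_0 [simp]: "k > 0 \<Longrightarrow> euler_prod k N $ 0 = 1"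
  unfolding euler_prod_def by (induction N) (auto simp: prod.nat_ivl_Suc')

lemma euler_prod_lessThan: "euler_prod k N = (\<Prod>j<N. 1 - fps_X ^ (k * (j + 1)))"
  unfolding euler_prod_def
  by (rule prod.reindex_bij_witness[of _ "\<lambda>j. j + 1" "\<lambda>j. j - 1"]) auto

lemma euler_prod_agree_truncation:
  assumes "k > 0" "m \<le> N"
  shows "fps_agree m (euler_prod k N) (euler_prod k m)"
  unfolding euler_prod_def
proof (rule fps_agree_prod_subset)
  fix j assume "j \<in> {1..N} - {1..m}"
  then have "m < k * j"
    using assms(1) by (auto intro: less_le_trans[of m j])
  then show "fps_agree m (1 - fps_X ^ (k * j)) (1 :: 'a fps)"
    by (rule fps_agree_one_minus_X_power)
qed (use assms in auto)

lemma f_fps_agree_euler_prod: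
  assumes "k > 0" "m \<le> N"
  shows "fps_agree m (f_fps k) (euler_prod k N)"
  unfolding fps_agree_def
proof (intro allI impI)
  fix j assume "j \<le> m"
  have "f_fps k $ j = euler_prod k j $ j"
    by (simp add: f_fps_def euler_prod_def)
  also have "\<dots> = euler_prod k N $ j"
  proof -
    have "fps_agree j (euler_prod k N) (euler_prod k j)"
      using assms \<open>j \<le> m\<close> by (intro euler_prod_agree_truncation) auto
    then show ?thesis
      unfolding fps_agree_def by (metis order_refl)
  qed
  finally show "f_fps k $ j = euler_prod k N $ j" .
qed

lemma f_fps_nth_0 [simp]: "f_fps k $ 0 = 1"
  by (simp add: f_fps_def)

definition euler_prod_plus :: "nat \<Rightarrow> nat \<Rightarrow> 'a::comm_ring_1 fps" where
  "euler_prod_plus k N = (\<Prod>j\<in>{1..N}. 1 + fps_X ^ (k * j))"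

lemma euler_prod_plus_nth_0 [simp]: "k > 0 \<Longrightarrow> euler_prod_plus k N $ 0 = 1"
  unfolding euler_prod_plus_def by (induction N) (auto simp: prod.nat_ivl_Suc')

lemma euler_prod_plus_lessThan: "euler_prod_plus k N = (\<Prod>j<N. 1 + fps_X ^ (k * (j + 1)))"
  unfolding euler_prod_plus_def
  by (rule prod.reindex_bij_witness[of _ "\<lambda>j. j + 1" "\<lambda>j. j - 1"]) auto

lemma euler_prod_plus_mult_euler_prod: "euler_prod_plus k N * euler_prod k N = euler_prod (2 * k) N"
  unfolding euler_prod_plus_def euler_prod_def prod.distrib[symmetric]
  by (intro prod.cong) (simp_all add: algebra_simps power_add[symmetric] mult_2)

lemma euler_prod_plus_agree:
  assumes "k > 0" "m \<le> N"
  shows "fps_agree m (euler_prod_plus k N) (f_fps (2 * k) * inverse (f_fps k))"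
proof -
  have "euler_prod_plus k N = euler_prod (2 * k) N * inverse (euler_prod k N :: rat fps)"
    using assms(1) by (intro fps_eq_mult_inverse euler_prod_plus_mult_euler_prod) simp
  also have "fps_agree m \<dots> (f_fps (2 * k) * inverse (f_fps k))"
    using assms
    by (intro fps_agree_mult fps_agree_inverse fps_agree_sym[OF f_fps_agree_euler_prod]) simp_all
  finally show ?thesis .
qed

section \<open>Substituting $q^k$ and $-q$ for $q$\<close>

definition fps_expand :: "nat \<Rightarrow> 'a::comm_ring_1 fps \<Rightarrow> 'a fps" where
  "fps_expand k f = f oo fps_X ^ k"

definition fps_extract :: "nat \<Rightarrow> 'a fps \<Rightarrow> 'a fps" where
  "fps_extract k f = Abs_fps (\<lambda>n. f $ (k * n))"

lemma fps_expand_nth: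
  assumes "k > 0"
  shows "fps_expand k f $ n = (if k dvd n then f $ (n div k) else 0)"
proof -
  have "fps_expand k f $ n = (\<Sum>i = 0..n. f $ i * (if n = k * i then 1 else 0))"
    unfolding fps_expand_def fps_compose_nth by (simp add: power_mult[symmetric])
  also have "\<dots> = (\<Sum>i = 0..n. if i = n div k then (if k dvd n then f $ i else 0) else 0)"
  proof (rule sum.cong)
    fix i
    have "n = k * i \<longleftrightarrow> k dvd n \<and> i = n div k"
      using assms by auto
    then show "f $ i * (if n = k * i then 1 else 0)
        = (if i = n div k then (if k dvd n then f $ i else 0) else 0)"
      by auto
  qed simp
  also have "\<dots> = (if k dvd n then f $ (n div k) else 0)"
    by (simp add: sum.delta)
  finally show ?thesis .
qed

lemma fps_expand_mult:
  "k > 0 \<Longrightarrow> fps_expand k (f * g) = fps_expand k f * fps_expand k (g :: 'a::idom fps)"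
  unfolding fps_expand_def by (rule fps_compose_mult_distrib) simp

lemma fps_expand_power: "k > 0 \<Longrightarrow> fps_expand k (f ^ n) = fps_expand k (f :: 'a::idom fps) ^ n"
  by (induction n) (simp_all add: fps_expand_mult, simp add: fps_expand_def)

lemma fps_expand_prod:
  "k > 0 \<Longrightarrow> fps_expand k (prod f S) = (\<Prod>i\<in>S. fps_expand k (f i :: 'a::idom fps))"
  unfolding fps_expand_def by (rule fps_compose_prod_distrib) simp

lemma fps_expand_inverse:
  "k > 0 \<Longrightarrow> f $ 0 \<noteq> 0 \<Longrightarrow> fps_expand k (inverse f) = inverse (fps_expand k (f :: 'a::field fps))"
  unfolding fps_expand_def by (rule fps_inverse_compose) auto

lemma fps_expand_one_minus_X_power:
  "k > 0 \<Longrightarrow> fps_expand k (1 - fps_X ^ j) = 1 - (fps_X ^ (k * j) :: 'a::idom fps)"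
  unfolding fps_expand_def fps_compose_sub_distrib
  by (simp add: fps_X_power_compose power_mult)

lemma fps_expand_agree:
  assumes "k > 0" "fps_agree m f g"
  shows "fps_agree m (fps_expand k f) (fps_expand k g)"
  unfolding fps_agree_def
proof (intro allI impI)
  fix j
  assume "j \<le> m"
  then have "j div k \<le> m"
    using div_le_dividend le_trans by blast
  with assms(2) have "f $ (j div k) = g $ (j div k)"
    by (simp add: fps_agree_def)
  then show "fps_expand k f $ j = fps_expand k g $ j"
    by (simp add: fps_expand_nth[OF assms(1)])
qed

lemma fps_expand_inj: "k > 0 \<Longrightarrow> fps_expand k f = fps_expand k g \<Longrightarrow> f = g"
proof (rule fps_ext)
  fix n
  assume "k > 0" "fps_expand k f = fps_expand k g"
  then have "fps_expand k f $ (k * n) = fps_expand k g $ (k * n)"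
    by simp
  with \<open>k > 0\<close> show "f $ n = g $ n"
    by (simp add: fps_expand_nth)
qed

lemma fps_expand_euler_prod:
  "k > 0 \<Longrightarrow> fps_expand k (euler_prod j N) = (euler_prod (k * j) N :: 'a::idom fps)"
  unfolding euler_prod_def by (simp add: fps_expand_prod fps_expand_one_minus_X_power mult.assoc)

lemma fps_expand_f_fps:
  assumes "k > 0" "j > 0"
  shows "fps_expand k (f_fps j) = f_fps (k * j)"
proof (rule fps_eq_if_agree)
  fix m
  have "fps_agree m (fps_expand k (f_fps j)) (fps_expand k (euler_prod j m))"
    using assms by (intro fps_expand_agree f_fps_agree_euler_prod) auto
  also have "fps_expand k (euler_prod j m :: rat fps) = euler_prod (k * j) m"
    using assms(1) by (rule fps_expand_euler_prod)
  also have "fps_agree m \<dots> (f_fps (k * j))"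
    using assms by (intro fps_agree_sym[OF f_fps_agree_euler_prod]) auto
  finally show "fps_agree m (fps_expand k (f_fps j)) (f_fps (k * j))" .
qed

definition fps_neg_var :: "'a::comm_ring_1 fps \<Rightarrow> 'a fps" where
  "fps_neg_var f = f oo - fps_X"

lemma fps_neg_var_nth: "fps_neg_var f $ n = (-1) ^ n * f $ n"
  unfolding fps_neg_var_def fps_compose_uminus' by simp

lemma fps_neg_var_mult: "fps_neg_var (f * g) = fps_neg_var f * fps_neg_var (g :: 'a::idom fps)"
  unfolding fps_neg_var_def by (rule fps_compose_mult_distrib) simp

lemma fps_neg_var_power: "fps_neg_var (f ^ n) = fps_neg_var (f :: 'a::idom fps) ^ n"
  by (induction n) (simp_all add: fps_neg_var_mult, simp add: fps_neg_var_def)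

lemma fps_neg_var_prod: "fps_neg_var (prod f S) = (\<Prod>i\<in>S. fps_neg_var (f i :: 'a::idom fps))"
  unfolding fps_neg_var_def by (rule fps_compose_prod_distrib) simp

lemma fps_neg_var_inverse:
  "f $ 0 \<noteq> 0 \<Longrightarrow> fps_neg_var (inverse f) = inverse (fps_neg_var (f :: 'a::field fps))"
  unfolding fps_neg_var_def by (rule fps_inverse_compose) auto

lemma fps_neg_var_agree: "fps_agree m f g \<Longrightarrow> fps_agree m (fps_neg_var f) (fps_neg_var g)"
  by (simp add: fps_agree_def fps_neg_var_nth)

lemma fps_neg_var_one_minus_X_power:
  "fps_neg_var (1 - fps_X ^ j) = 1 - (-1) ^ j * (fps_X ^ j :: 'a::idom fps)"
proof -
  have "fps_X ^ j oo - fps_X = (- fps_X :: 'a fps) ^ j"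
    by (rule fps_X_power_compose) simp
  then show ?thesis
    unfolding fps_neg_var_def fps_compose_sub_distrib by (simp add: power_minus[of fps_X])
qed

lemma fps_extract_neg_var:
  assumes "odd k"
  shows "fps_extract k (fps_neg_var f) = fps_neg_var (fps_extract k f)"
proof (rule fps_ext)
  fix n
  have "(-1 :: 'a) ^ (k * n) = (-1) ^ n"
    using assms by (simp add: power_mult)
  then show "fps_extract k (fps_neg_var f) $ n = fps_neg_var (fps_extract k f) $ n"
    by (simp add: fps_extract_def fps_neg_var_nth)
qed

lemma fps_neg_var_euler_prod_even:
  assumes "even k"
  shows "fps_neg_var (euler_prod k N) = (euler_prod k N :: 'a::idom fps)"
  unfolding euler_prod_def fps_neg_var_prod
proof (rule prod.cong)
  fix j
  have "(-1 :: 'a fps) ^ (k * j) = 1"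
    using assms by (simp add: neg_one_even_power)
  then show "fps_neg_var (1 - fps_X ^ (k * j)) = (1 - fps_X ^ (k * j) :: 'a fps)"
    by (simp add: fps_neg_var_one_minus_X_power)
qed simp

lemma euler_prod_double:
  "euler_prod k (2 * N)
     = (\<Prod>t<N. 1 - fps_X ^ (k * (2 * t + 1))) * (euler_prod (2 * k) N :: 'a::comm_ring_1 fps)"
proof -
  have "euler_prod (2 * k) N = (\<Prod>t<N. 1 - (fps_X :: 'a fps) ^ (k * (2 * t + 2)))"
    unfolding euler_prod_lessThan by (simp add: algebra_simps)
  then show ?thesis
    unfolding euler_prod_def[of k] prod_group2 prod.distrib by simp
qed

lemma fps_neg_var_euler_prod_double:
  assumes "odd k"
  shows "fps_neg_var (euler_prod k (2 * N))
       = (\<Prod>t<N. 1 + fps_X ^ (k * (2 * t + 1))) * (euler_prod (2 * k) N :: 'a::idom fps)"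
proof -
  have "fps_neg_var ((1 - fps_X ^ (k * (2 * t + 1))) * (1 - fps_X ^ (k * (2 * t + 2))))
      = (1 + fps_X ^ (k * (2 * t + 1))) * (1 - (fps_X :: 'a fps) ^ (k * (2 * t + 2)))" for t
  proof -
    have "(-1 :: 'a fps) ^ (k * (2 * t + 1)) = -1" "(-1 :: 'a fps) ^ (k * (2 * t + 2)) = 1"
      using assms by (simp_all add: neg_one_odd_power neg_one_even_power)
    then show ?thesis
      by (simp add: fps_neg_var_mult fps_neg_var_one_minus_X_power)
  qed
  then have "fps_neg_var (euler_prod k (2 * N))
      = (\<Prod>t<N. (1 + fps_X ^ (k * (2 * t + 1))) * (1 - fps_X ^ (k * (2 * t + 2))) :: 'a fps)"
    unfolding euler_prod_def prod_group2 by (simp add: fps_neg_var_prod)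
  also have "(\<Prod>t<N. 1 - (fps_X :: 'a fps) ^ (k * (2 * t + 2))) = euler_prod (2 * k) N"
    unfolding euler_prod_lessThan by (simp add: algebra_simps)
  ultimately show ?thesis
    by (simp add: prod.distrib)
qed

lemma fps_neg_var_euler_prod_odd:
  fixes N :: nat
  assumes "odd k"
  shows "fps_neg_var (euler_prod k (2 * N)) * euler_prod k (2 * N) * euler_prod (4 * k) N
       = (euler_prod (2 * k) (2 * N) * euler_prod (2 * k) N ^ 2 :: 'a::idom fps)"
proof -
  have "(1 + x) * (1 - x) = 1 - x ^ 2" for x :: "'a fps"
    by (simp add: algebra_simps power2_eq_square)
  moreover have "(fps_X :: 'a fps) ^ (2 * k * (2 * t + 1)) = (fps_X ^ (k * (2 * t + 1))) ^ 2" for t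
    by (simp add: power_mult[symmetric] mult_ac)
  ultimately have "(\<Prod>t<N. 1 + fps_X ^ (k * (2 * t + 1))) * (\<Prod>t<N. 1 - fps_X ^ (k * (2 * t + 1)))
      = (\<Prod>t<N. 1 - fps_X ^ (2 * k * (2 * t + 1)) :: 'a fps)"
    unfolding prod.distrib[symmetric] by simp
  moreover have "euler_prod (2 * k) (2 * N)
      = (\<Prod>t<N. 1 - fps_X ^ (2 * k * (2 * t + 1))) * (euler_prod (4 * k) N :: 'a fps)"
    using euler_prod_double[of "2 * k" N] by (simp add: mult.assoc)
  ultimately show ?thesis
    unfolding fps_neg_var_euler_prod_double[OF assms] unfolding euler_prod_double[of k N]
    by (simp add: power2_eq_square mult_ac)
qed

lemma fps_neg_var_f_fps_even:
  assumes "even k" "k > 0"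
  shows "fps_neg_var (f_fps k) = f_fps k"
proof (rule fps_eq_if_agree)
  fix m
  have "fps_agree m (fps_neg_var (f_fps k)) (fps_neg_var (euler_prod k m))"
    using assms by (intro fps_neg_var_agree f_fps_agree_euler_prod) auto
  also have "fps_neg_var (euler_prod k m :: rat fps) = euler_prod k m"
    using assms(1) by (rule fps_neg_var_euler_prod_even)
  also have "fps_agree m \<dots> (f_fps k)"
    using assms by (intro fps_agree_sym[OF f_fps_agree_euler_prod]) auto
  finally show "fps_agree m (fps_neg_var (f_fps k)) (f_fps k)" .
qed

lemma fps_neg_var_f_fps_odd:
  assumes "odd k"
  shows "fps_neg_var (f_fps k) * f_fps k * f_fps (4 * k) = f_fps (2 * k) ^ 3"
proof (rule fps_eq_if_agree)
  fix m
  have k: "k > 0"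
    using assms by (rule odd_pos)
  have "fps_agree m (fps_neg_var (f_fps k) * f_fps k * f_fps (4 * k))
      (fps_neg_var (euler_prod k (2 * m)) * euler_prod k (2 * m) * euler_prod (4 * k) m)"
    using k by (intro fps_agree_mult fps_neg_var_agree f_fps_agree_euler_prod) auto
  also have "\<dots> = euler_prod (2 * k) (2 * m) * euler_prod (2 * k) m ^ 2"
    using assms by (rule fps_neg_var_euler_prod_odd)
  also have "fps_agree m \<dots> (f_fps (2 * k) * f_fps (2 * k) ^ 2)"
    using k by (intro fps_agree_mult fps_agree_power fps_agree_sym[OF f_fps_agree_euler_prod]) auto
  also have "f_fps (2 * k) * f_fps (2 * k) ^ 2 = f_fps (2 * k) ^ 3"
    by (simp add: power2_eq_square power3_eq_cube)
  finally show "fps_agree m (fps_neg_var (f_fps k) * f_fps k * f_fps (4 * k)) (f_fps (2 * k) ^ 3)" .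
qed

section \<open>3-dissection and the cubic norm\<close>

definition trisect :: "nat \<Rightarrow> 'a::zero fps \<Rightarrow> 'a fps" where
  "trisect r f = Abs_fps (\<lambda>n. if n mod 3 = r then f $ n else 0)"

definition supp_mod3 :: "nat \<Rightarrow> 'a::zero fps \<Rightarrow> bool" where
  "supp_mod3 r f \<longleftrightarrow> (\<forall>n. f $ n \<noteq> 0 \<longrightarrow> n mod 3 = r)"

lemma trisect_sum: "f = trisect 0 f + trisect 1 f + trisect 2 (f :: 'a::monoid_add fps)"
  by (rule fps_ext) (auto simp: trisect_def)

lemma trisect_add: "trisect r (f + g) = trisect r f + trisect r (g :: 'a::monoid_add fps)"
  by (rule fps_ext) (simp add: trisect_def)

lemma trisect_diff: "trisect r (f - g) = trisect r f - trisect r (g :: 'a::group_add fps)"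
  by (rule fps_ext) (simp add: trisect_def)

lemma trisect_agree: "fps_agree m f g \<Longrightarrow> fps_agree m (trisect r f) (trisect r g)"
  by (simp add: fps_agree_def trisect_def)

lemma trisect_one: "trisect 0 1 = 1" "trisect 1 1 = 0" "trisect 2 1 = 0"
  by (auto intro!: fps_ext simp: trisect_def)

lemma trisect_one_minus_X_power:
  "trisect r (1 - fps_X ^ t :: 'a::comm_ring_1 fps)
     = (if r = 0 then 1 else 0) - (if t mod 3 = r then fps_X ^ t else 0)"
  by (rule fps_ext) (auto simp: trisect_def)

lemma supp_mod3_trisect: "supp_mod3 r (trisect r f)"
  by (auto simp: supp_mod3_def trisect_def)

lemma trisect_supp_mod3:
  "supp_mod3 s f \<Longrightarrow> r < 3 \<Longrightarrow> s < 3 \<Longrightarrow> trisect r f = (if r = s then f else 0)"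
  by (rule fps_ext) (auto simp: trisect_def supp_mod3_def)

lemma supp_mod3_add: "supp_mod3 r f \<Longrightarrow> supp_mod3 r g \<Longrightarrow> supp_mod3 r (f + g :: 'a::monoid_add fps)"
  unfolding supp_mod3_def by (metis add_0 fps_add_nth)

lemma supp_mod3_uminus: "supp_mod3 r f \<Longrightarrow> supp_mod3 r (- f :: 'a::group_add fps)"
  by (simp add: supp_mod3_def)

lemma supp_mod3_const: "supp_mod3 0 (fps_const c)"
  by (simp add: supp_mod3_def)

lemma supp_mod3_mult:
  fixes f g :: "'a::comm_ring_1 fps"
  assumes "supp_mod3 i f" "supp_mod3 j g"
  shows "supp_mod3 ((i + j) mod 3) (f * g)"
  unfolding supp_mod3_def
proof (intro allI impI)
  fix n
  assume "(f * g) $ n \<noteq> 0"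
  then obtain l where l: "l \<le> n" "f $ l * g $ (n - l) \<noteq> 0"
    unfolding fps_mult_nth by (metis (no_types, lifting) atLeastAtMost_iff sum.neutral)
  then have "f $ l \<noteq> 0" "g $ (n - l) \<noteq> 0"
    by auto
  then have "l mod 3 = i" "(n - l) mod 3 = j"
    using assms by (simp_all add: supp_mod3_def)
  moreover have "n = l + (n - l)"
    using l by simp
  ultimately show "n mod 3 = (i + j) mod 3"
    by (metis mod_add_eq)
qed

lemma supp_mod3_fps_expand: "supp_mod3 0 (fps_expand 3 f)"
  by (auto simp: supp_mod3_def fps_expand_nth)

lemma fps_expand_fps_extract: "fps_expand 3 (fps_extract 3 f) = trisect 0 f"
  by (rule fps_ext) (auto simp: fps_expand_nth fps_extract_def trisect_def)

lemma fps_expand_fps_extract_supp_mod3_0: "supp_mod3 0 f \<Longrightarrow> fps_expand 3 (fps_extract 3 f) = f"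
  by (rule fps_ext) (auto simp: fps_expand_nth fps_extract_def supp_mod3_def)

lemma supp_mod3_inverse:
  fixes f :: "'a::field fps"
  assumes "supp_mod3 0 f" "f $ 0 \<noteq> 0"
  shows "supp_mod3 0 (inverse f)"
proof -
  have "inverse f = inverse (fps_expand 3 (fps_extract 3 f))"
    using assms(1) by (simp add: fps_expand_fps_extract_supp_mod3_0)
  also have "\<dots> = fps_expand 3 (inverse (fps_extract 3 f))"
    using assms(2) by (simp add: fps_expand_inverse fps_extract_def)
  finally show ?thesis
    by (simp add: supp_mod3_fps_expand)
qed

lemma trisect_mult:
  fixes f g :: "'a::comm_ring_1 fps"
  defines "a0 \<equiv> trisect 0 f" and "a1 \<equiv> trisect 1 f" and "a2 \<equiv> trisect 2 f"
  defines "b0 \<equiv> trisect 0 g" and "b1 \<equiv> trisect 1 g" and "b2 \<equiv> trisect 2 g"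
  shows "trisect 0 (f * g) = a0 * b0 + a1 * b2 + a2 * b1"
    and "trisect 1 (f * g) = a0 * b1 + a1 * b0 + a2 * b2"
    and "trisect 2 (f * g) = a0 * b2 + a2 * b0 + a1 * b1"
proof -
  have component: "trisect r (trisect i f * trisect j g)
      = (if r = (i + j) mod 3 then trisect i f * trisect j g else 0)"
    if "r < 3" "i < 3" "j < 3" for r i j
    using that by (intro trisect_supp_mod3 supp_mod3_mult supp_mod3_trisect) auto
  have expand: "trisect r (f * g) = trisect r (a0 * b0) + trisect r (a1 * b0) + trisect r (a2 * b0)
      + trisect r (a0 * b1) + trisect r (a1 * b1) + trisect r (a2 * b1)
      + trisect r (a0 * b2) + trisect r (a1 * b2) + trisect r (a2 * b2)" for r
    unfolding assms
    by (subst (1 2) trisect_sum) (simp only: distrib_left distrib_right trisect_add add.assoc)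
  show "trisect 0 (f * g) = a0 * b0 + a1 * b2 + a2 * b1"
    unfolding expand unfolding assms by (simp add: component)
  show "trisect 1 (f * g) = a0 * b1 + a1 * b0 + a2 * b2"
    unfolding expand unfolding assms by (simp add: component)
  show "trisect 2 (f * g) = a0 * b2 + a2 * b0 + a1 * b1"
    unfolding expand unfolding assms by (simp add: component)
qed

lemma trisect_0_mult_supp_mod3_0:
  fixes c f :: "'a::comm_ring_1 fps"
  assumes "supp_mod3 0 c"
  shows "trisect 0 (c * f) = c * trisect 0 f"
proof -
  have "trisect 0 c = c" "trisect 1 c = 0" "trisect 2 c = 0"
    using trisect_supp_mod3[OF assms] by auto
  then show ?thesis
    by (simp add: trisect_mult)
qed

text \<open>For a 3-dissection \<open>f = a0 + a1 + a2\<close> the norm below equals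
  \<open>(a0 + a1 + a2) (a0 + w a1 + w\<^sup>2 a2) (a0 + w\<^sup>2 a1 + w a2)\<close>, i.e. the product of
  \<open>f(q)\<close>, \<open>f(w q)\<close> and \<open>f(w\<^sup>2 q)\<close> for a primitive cube root of unity \<open>w\<close>;
  hence it is multiplicative.\<close>

definition trinorm :: "'a::comm_ring_1 fps \<Rightarrow> 'a fps" where
  "trinorm f = trisect 0 f ^ 3 + trisect 1 f ^ 3 + trisect 2 f ^ 3
     - 3 * trisect 0 f * trisect 1 f * trisect 2 f"

lemma trinorm_mult: "trinorm (f * g) = trinorm f * trinorm g"
proof -
  have "(a0 * b0 + a1 * b2 + a2 * b1) ^ 3 + (a0 * b1 + a1 * b0 + a2 * b2) ^ 3
      + (a0 * b2 + a2 * b0 + a1 * b1) ^ 3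
      - 3 * (a0 * b0 + a1 * b2 + a2 * b1) * (a0 * b1 + a1 * b0 + a2 * b2)
          * (a0 * b2 + a2 * b0 + a1 * b1)
    = (a0 ^ 3 + a1 ^ 3 + a2 ^ 3 - 3 * a0 * a1 * a2) * (b0 ^ 3 + b1 ^ 3 + b2 ^ 3 - 3 * b0 * b1 * b2)"
    for a0 a1 a2 b0 b1 b2 :: "'a fps"
    by (simp add: algebra_simps power3_eq_cube)
  then show ?thesis
    unfolding trinorm_def trisect_mult .
qed

lemma trinorm_one [simp]: "trinorm 1 = 1"
  unfolding trinorm_def trisect_one by simp

lemma trinorm_power: "trinorm (f ^ n) = trinorm f ^ n"
  by (induction n) (simp_all add: trinorm_mult)

lemma trinorm_prod: "trinorm (prod f S) = (\<Prod>i\<in>S. trinorm (f i))"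
  by (induction S rule: infinite_finite_induct) (simp_all add: trinorm_mult)

lemma trinorm_agree: "fps_agree m f g \<Longrightarrow> fps_agree m (trinorm f) (trinorm g)"
  unfolding trinorm_def
  by (intro fps_agree_add fps_agree_diff fps_agree_mult fps_agree_power trisect_agree) auto

lemma trinorm_nth_0: "trinorm f $ 0 = (f $ 0) ^ 3"
proof -
  have "trisect 0 f $ 0 = f $ 0" "trisect 1 f $ 0 = 0" "trisect 2 f $ 0 = 0"
    by (simp_all add: trisect_def)
  then show ?thesis
    by (simp add: trinorm_def power3_eq_cube)
qed

lemma trinorm_inverse:
  fixes f :: "'a::field fps"
  assumes "f $ 0 \<noteq> 0"
  shows "trinorm (inverse f) = inverse (trinorm f)"
proof -
  have "trinorm f * trinorm (inverse f) = 1"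
    using assms by (simp add: trinorm_mult[symmetric] inverse_mult_eq_1')
  then show ?thesis
    by (rule fps_inverse_unique[symmetric])
qed

lemma supp_mod3_trinorm: "supp_mod3 0 (trinorm f)"
proof -
  have t: "supp_mod3 0 (trisect 0 f)" "supp_mod3 1 (trisect 1 f)" "supp_mod3 2 (trisect 2 f)"
    by (rule supp_mod3_trisect)+
  have cube: "supp_mod3 0 (trisect r f ^ 3)" if "supp_mod3 r (trisect r f)" for r
  proof -
    have "supp_mod3 (((r + r) mod 3 + r) mod 3) (trisect r f ^ 3)"
      using supp_mod3_mult[OF supp_mod3_mult[OF that that] that] by (simp only: power3_eq_cube)
    moreover have "((r + r) mod 3 + r) mod 3 = 0"
      by presburger
    ultimately show ?thesis
      by simp
  qed
  have "supp_mod3 0 (fps_const 3 * trisect 0 f * trisect 1 f * trisect 2 f)"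
    using supp_mod3_mult[OF supp_mod3_mult[OF supp_mod3_mult[OF supp_mod3_const t(1)] t(2)] t(3)]
    by simp
  then show ?thesis
    unfolding trinorm_def diff_conv_add_uminus
    by (intro supp_mod3_add supp_mod3_uminus cube t) (simp add: fps_numeral_fps_const)
qed

lemma trinorm_one_minus_X_power_coprime:
  assumes "\<not> 3 dvd t"
  shows "trinorm (1 - fps_X ^ t) = 1 - (fps_X ^ (3 * t) :: 'a::comm_ring_1 fps)"
proof -
  have "t mod 3 = 1 \<or> t mod 3 = 2"
    using assms by presburger
  then have "trinorm (1 - fps_X ^ t) = 1 + (- (fps_X ^ t)) ^ 3"
    unfolding trinorm_def trisect_one_minus_X_power by (auto simp: power3_eq_cube)
  also have "\<dots> = 1 - (fps_X ^ (3 * t) :: 'a fps)"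
    by (simp add: power_mult[symmetric] mult.commute)
  finally show ?thesis .
qed

lemma trinorm_one_minus_X_power_dvd:
  "3 dvd t \<Longrightarrow> trinorm (1 - fps_X ^ t) = (1 - fps_X ^ t :: 'a::comm_ring_1 fps) ^ 3"
  unfolding trinorm_def trisect_one_minus_X_power by auto

lemma trinorm_euler_prod:
  fixes M :: nat
  assumes "\<not> 3 dvd k"
  shows "trinorm (euler_prod k (3 * M)) * euler_prod (9 * k) M
       = (euler_prod (3 * k) (3 * M) * euler_prod (3 * k) M ^ 3 :: 'a::comm_ring_1 fps)"
proof -
  define R :: "'a fps" where
    "R = (\<Prod>t<M. (1 - fps_X ^ (3 * k * (3 * t + 1))) * (1 - fps_X ^ (3 * k * (3 * t + 2))))"
  have coprime: "\<not> 3 dvd k * (3 * t + 1)" "\<not> 3 dvd k * (3 * t + 2)" for t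
  proof -
    have "k * (3 * t + 1) = 3 * (k * t) + k" "k * (3 * t + 2) = 3 * (k * t) + 2 * k"
      by (simp_all add: algebra_simps)
    then show "\<not> 3 dvd k * (3 * t + 1)" "\<not> 3 dvd k * (3 * t + 2)"
      using assms by presburger+
  qed
  have "trinorm (euler_prod k (3 * M)) = (\<Prod>t<M. (1 - fps_X ^ (3 * (k * (3 * t + 1))))
      * (1 - fps_X ^ (3 * (k * (3 * t + 2)))) * (1 - fps_X ^ (k * (3 * t + 3))) ^ 3 :: 'a fps)"
    unfolding euler_prod_def trinorm_prod prod_group3 trinorm_mult
      trinorm_one_minus_X_power_coprime[OF coprime(1)] trinorm_one_minus_X_power_coprime[OF coprime(2)]
    by (simp add: trinorm_one_minus_X_power_dvd)
  also have "\<dots> = R * euler_prod (3 * k) M ^ 3"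
    unfolding R_def euler_prod_lessThan prod.distrib prod_power_distrib[symmetric]
    by (simp add: algebra_simps)
  finally have a: "trinorm (euler_prod k (3 * M)) = R * euler_prod (3 * k) M ^ 3" .
  have b: "euler_prod (3 * k) (3 * M) = R * euler_prod (9 * k) M"
    unfolding euler_prod_lessThan[of "9 * k"] unfolding euler_prod_def prod_group3 R_def
      prod.distrib[symmetric]
    by (rule prod.cong) (simp_all add: algebra_simps)
  show ?thesis
    unfolding a b by (simp add: algebra_simps)
qed

lemma trinorm_f_fps:
  assumes "\<not> 3 dvd k"
  shows "trinorm (f_fps k) * f_fps (9 * k) = f_fps (3 * k) ^ 4"
proof (rule fps_eq_if_agree)
  fix m
  have k: "k > 0"
    using assms by (intro gr0I) auto
  have "fps_agree m (trinorm (f_fps k) * f_fps (9 * k))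
      (trinorm (euler_prod k (3 * m)) * euler_prod (9 * k) m)"
    using k by (intro fps_agree_mult trinorm_agree f_fps_agree_euler_prod) auto
  also have "\<dots> = euler_prod (3 * k) (3 * m) * euler_prod (3 * k) m ^ 3"
    using assms by (rule trinorm_euler_prod)
  also have "fps_agree m \<dots> (f_fps (3 * k) * f_fps (3 * k) ^ 3)"
    using k by (intro fps_agree_mult fps_agree_power fps_agree_sym[OF f_fps_agree_euler_prod]) auto
  also have "f_fps (3 * k) * f_fps (3 * k) ^ 3 = f_fps (3 * k) ^ 4"
    by (simp add: power_Suc[symmetric] del: power_Suc)
  finally show "fps_agree m (trinorm (f_fps k) * f_fps (9 * k)) (f_fps (3 * k) ^ 4)" .
qed

section \<open>Gaussian binomial coefficients\<close>

lemma Suc_choose_2: "Suc i choose 2 = (i choose 2) + i"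
  by (simp add: numeral_2_eq_2)

lemma double_choose_2: "2 * int (i choose 2) = int i * (int i - 1)"
  by (induction i) (simp_all add: Suc_choose_2 algebra_simps binomial_eq_0)

lemma sum_lessThan_choose_2: "(\<Sum>j<n. j) = n choose 2"
  by (induction n) (simp_all add: Suc_choose_2 binomial_eq_0)

fun qbinomial :: "'a::comm_ring_1 \<Rightarrow> nat \<Rightarrow> nat \<Rightarrow> 'a" where
  "qbinomial Q 0 i = (if i = 0 then 1 else 0)"
| "qbinomial Q (Suc m) i =
     (if i = 0 then 1 else qbinomial Q m i + Q ^ (Suc m - i) * qbinomial Q m (i - 1))"

definition qpoch :: "'a::comm_ring_1 \<Rightarrow> nat \<Rightarrow> 'a" where
  "qpoch Q m = (\<Prod>j\<in>{1..m}. 1 - Q ^ j)"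

lemma qpoch_0 [simp]: "qpoch Q 0 = 1"
  by (simp add: qpoch_def)

lemma qpoch_Suc: "qpoch Q (Suc m) = qpoch Q m * (1 - Q ^ Suc m)"
  unfolding qpoch_def by (simp add: prod.nat_ivl_Suc' mult.commute)

lemma qpoch_X_power: "qpoch (fps_X ^ c) i = euler_prod c i"
  unfolding qpoch_def euler_prod_def by (simp add: power_mult[symmetric])

lemma qbinomial_eq_0: "m < i \<Longrightarrow> qbinomial Q m i = 0"
  by (induction m arbitrary: i) auto

lemma qbinomial_0_right [simp]: "qbinomial Q m 0 = 1"
  by (cases m) auto

lemma qbinomial_same: "qbinomial Q m m = 1"
  by (induction m) (auto simp: qbinomial_eq_0)

lemma qbinomial_qpoch:
  "i \<le> m \<Longrightarrow> qbinomial Q m i * qpoch Q i * qpoch Q (m - i) = qpoch Q m"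
proof (induction m arbitrary: i)
  case (Suc m)
  consider "i = 0" | "i = Suc m" | i' where "i = Suc i'" "i' < m"
    using Suc.prems by (metis le_SucE not0_implies_Suc Suc_le_lessD)
  then show ?case
  proof cases
    case 3
    have IH: "qbinomial Q m i * qpoch Q i * qpoch Q (m - i) = qpoch Q m"
      "qbinomial Q m i' * qpoch Q i' * qpoch Q (m - i') = qpoch Q m"
      using Suc.IH 3 by simp_all
    have diff: "m - i' = Suc (m - i)" "Suc m - i = m - i'"
      using 3 by auto
    have "m - i' + Suc i' = Suc m"
      using 3 by simp
    then have pow: "Q ^ (m - i') * Q ^ Suc i' = Q ^ Suc m"
      by (metis power_add)
    have "qbinomial Q (Suc m) i * qpoch Q i * qpoch Q (Suc m - i)
        = qbinomial Q m i * qpoch Q i * qpoch Q (m - i')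
          + Q ^ (m - i') * qbinomial Q m i' * qpoch Q i * qpoch Q (m - i')"
      using 3 by (simp add: diff algebra_simps)
    also have "\<dots> = (qbinomial Q m i * qpoch Q i * qpoch Q (m - i)) * (1 - Q ^ (m - i'))
        + Q ^ (m - i') * (1 - Q ^ Suc i') * (qbinomial Q m i' * qpoch Q i' * qpoch Q (m - i'))"
      unfolding diff(1) qpoch_Suc 3(1) by (simp add: diff algebra_simps)
    also have "\<dots> = qpoch Q m * (1 - Q ^ (m - i') + Q ^ (m - i') - Q ^ (m - i') * Q ^ Suc i')"
      unfolding IH by (simp add: algebra_simps)
    also have "\<dots> = qpoch Q (Suc m)"
      unfolding pow qpoch_Suc by simp
    finally show ?thesis .
  qed (simp_all add: qbinomial_eq_0 qbinomial_same)
qed simp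

lemma qbinomial_Suc:
  "qbinomial Q (Suc m) i = qbinomial Q m i + (if i = 0 then 0 else Q ^ (Suc m - i) * qbinomial Q m (i - 1))"
  by (cases i) simp_all

lemma qbinomial_theorem:
  "(\<Prod>j<m. u + v * Q ^ j) = (\<Sum>i\<le>m. qbinomial Q m i * Q ^ (i choose 2) * v ^ i * u ^ (m - i))"
proof (induction m)
  case (Suc m)
  define t where "t i = qbinomial Q m i * Q ^ (i choose 2) * v ^ i * u ^ (m - i)" for i
  have old: "(\<Sum>i\<le>Suc m. qbinomial Q m i * Q ^ (i choose 2) * v ^ i * u ^ (Suc m - i))
      = u * (\<Sum>i\<le>m. t i)"
    unfolding sum.atMost_Suc sum_distrib_left t_def
    by (auto simp: qbinomial_eq_0 Suc_diff_le mult_ac intro!: sum.cong)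
  have new: "(\<Sum>i\<le>Suc m. (if i = 0 then 0 else Q ^ (Suc m - i) * qbinomial Q m (i - 1))
      * Q ^ (i choose 2) * v ^ i * u ^ (Suc m - i)) = v * Q ^ m * (\<Sum>i\<le>m. t i)"
    unfolding sum.atMost_Suc_shift sum_distrib_left
  proof (simp only: refl if_True add_0 mult_zero_left, rule sum.cong)
    fix i assume "i \<in> {..m}"
    then have "Q ^ (m - i) * Q ^ (Suc i choose 2) = Q ^ m * Q ^ (i choose 2)"
      by (simp add: Suc_choose_2 power_add[symmetric])
    then show "(if Suc i = 0 then 0 else Q ^ (Suc m - Suc i) * qbinomial Q m (Suc i - 1))
        * Q ^ (Suc i choose 2) * v ^ Suc i * u ^ (Suc m - Suc i) = v * Q ^ m * t i"
      unfolding t_def by (simp add: mult_ac)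
  qed simp
  have "(\<Prod>j<Suc m. u + v * Q ^ j) = (\<Sum>i\<le>m. t i) * (u + v * Q ^ m)"
    using Suc.IH by (simp add: t_def)
  also have "\<dots> = (\<Sum>i\<le>Suc m. qbinomial Q (Suc m) i * Q ^ (i choose 2) * v ^ i * u ^ (Suc m - i))"
    unfolding qbinomial_Suc distrib_right sum.distrib old new by (simp add: algebra_simps)
  finally show ?case .
qed (simp add: binomial_eq_0)

section \<open>The Jacobi triple product\<close>

definition theta_exp :: "nat \<Rightarrow> nat \<Rightarrow> int \<Rightarrow> int" where
  "theta_exp c a k = int c * k * (k - 1) div 2 + int a * k"

lemma theta_exp_double: "2 * theta_exp c a k = int c * k * (k - 1) + 2 * int a * k"
proof -
  have "even (k * (k - 1))"
    by simp
  then have "even (int c * k * (k - 1))"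
    by (simp add: mult.assoc)
  then show ?thesis
    unfolding theta_exp_def by (simp add: algebra_simps)
qed

lemma theta_exp_bounds:
  assumes "a < c"
  shows "0 \<le> theta_exp c a k" "\<bar>k\<bar> \<le> theta_exp c a k + 1"
proof -
  have c: "int c \<ge> 1" and ac: "int a \<le> int c - 1"
    using assms by auto
  have kk: "k * (k - 1) \<ge> 0"
    by (cases "k \<ge> 1") (auto intro: mult_nonneg_nonneg mult_nonpos_nonpos)
  have "2 * \<bar>k\<bar> \<le> int c * k * (k - 1) + 2 * int a * k + 2 \<and> 0 \<le> int c * k * (k - 1) + 2 * int a * k"
  proof (cases "k \<ge> 1")
    case True
    have e1: "int c * k * (k - 1) + 2 * int a * k + 2 - 2 * \<bar>k\<bar>
        = (int c - 1) * (k * (k - 1)) + (k - 1) * (k - 2) + 2 * (int a * k)"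
      using True by (simp add: algebra_simps)
    have e2: "int c * k * (k - 1) + 2 * int a * k = int c * (k * (k - 1)) + 2 * (int a * k)"
      by (simp add: algebra_simps)
    have "(int c - 1) * (k * (k - 1)) \<ge> 0" "int c * (k * (k - 1)) \<ge> 0"
      using c kk by simp_all
    moreover have "(k - 1) * (k - 2) \<ge> 0"
      using True by (cases "k = 1") (auto intro!: mult_nonneg_nonneg)
    moreover have "int a * k \<ge> 0"
      using True by simp
    ultimately show ?thesis
      using e1 e2 by linarith
  next
    case False
    define j where "j = - k"
    have j: "j \<ge> 0"
      using False j_def by simp
    have "int a * j \<le> (int c - 1) * j"
      using ac j by (rule mult_right_mono)
    moreover have "int c * (j * (j - 1)) \<ge> 0"
      using j c by (cases "j = 0") (auto intro!: mult_nonneg_nonneg)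
    moreover have "int c * k * (k - 1) + 2 * int a * k = int c * j * (j + 1) - 2 * int a * j"
      by (simp add: j_def algebra_simps)
    ultimately show ?thesis
      using j j_def by (auto simp: algebra_simps)
  qed
  then show "0 \<le> theta_exp c a k" "\<bar>k\<bar> \<le> theta_exp c a k + 1"
    using theta_exp_double[of c a k] by linarith+
qed

text \<open>The exponent of the \<open>i\<close>-th term in the \<open>q\<close>-binomial expansion of
  \<open>q\<^bsup>S\<^esup> jtp_prod c a n\<close> (see below), re-indexed by \<open>k = i - n\<close>.\<close>

lemma theta_exp_reindex:
  assumes "a < c" "n > 0" "i \<le> 2 * n"
  shows "c * (i choose 2) + (c * n - a) * (2 * n - i)
       = c * (n choose 2) + n * (c * n - a) + nat (theta_exp c a (int i - int n))"
proof -
  have "c \<le> c * n"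
    using assms(2) by simp
  then have "a \<le> c * n"
    using assms(1) by linarith
  then have an: "int (c * n - a) = int c * int n - int a"
    by (simp add: of_nat_diff)
  have i: "int (2 * n - i) = 2 * int n - int i"
    using assms(3) by (simp add: of_nat_diff)
  have ring: "C * (I * (I - 1)) + 2 * (C * N - A) * (2 * N - I)
      = C * (N * (N - 1)) + 2 * N * (C * N - A) + (C * (I - N) * (I - N - 1) + 2 * A * (I - N))"
    for C N A I :: int
    by (simp add: algebra_simps)
  have "2 * int (c * (i choose 2) + (c * n - a) * (2 * n - i))
      = int c * (2 * int (i choose 2)) + 2 * (int c * int n - int a) * (2 * int n - int i)"
    unfolding of_nat_add of_nat_mult an i by (simp add: algebra_simps)
  also have "\<dots> = int c * (2 * int (n choose 2)) + 2 * int n * (int c * int n - int a)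
      + 2 * theta_exp c a (int i - int n)"
    unfolding double_choose_2 theta_exp_double ring ..
  also have "\<dots> = 2 * (int (c * (n choose 2) + n * (c * n - a)) + theta_exp c a (int i - int n))"
    unfolding of_nat_add of_nat_mult an by (simp add: algebra_simps)
  finally have "int (c * (i choose 2) + (c * n - a) * (2 * n - i))
      = int (c * (n choose 2) + n * (c * n - a)) + theta_exp c a (int i - int n)"
    by (subst (asm) mult_cancel_left) simp
  then have "int (c * (i choose 2) + (c * n - a) * (2 * n - i))
      = int (c * (n choose 2) + n * (c * n - a) + nat (theta_exp c a (int i - int n)))"
    using theta_exp_bounds(1)[OF assms(1)] by (simp only: of_nat_add nat_0_le)
  then show ?thesis
    by (simp only: of_nat_eq_iff)
qed

text \<open>The truncation of the Jacobi triple product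
  \<open>\<Prod>t\<ge>0. (1 + q\<^bsup>a + c t\<^esup>) (1 + q\<^bsup>c (t + 1) - a\<^esup>)\<close>; for \<open>a < c\<close>
  the truncated subtraction \<open>c * j - a\<close> never cuts off.\<close>

definition jtp_prod :: "nat \<Rightarrow> nat \<Rightarrow> nat \<Rightarrow> 'a::comm_ring_1 fps" where
  "jtp_prod c a n = (\<Prod>t<n. 1 + fps_X ^ (a + c * t)) * (\<Prod>j\<in>{1..n}. 1 + fps_X ^ (c * j - a))"

lemma prod_X_power_lower_half:
  assumes "a < c"
  shows "(\<Prod>j<n. fps_X ^ (c * n - a) + fps_X ^ (c * j))
       = fps_X ^ (c * (n choose 2)) * (\<Prod>j\<in>{1..n}. 1 + fps_X ^ (c * j - a) :: 'a::comm_ring_1 fps)"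
proof -
  have factor: "fps_X ^ (c * n - a) + fps_X ^ (c * j)
      = fps_X ^ (c * j) * (1 + fps_X ^ (c * (n - j) - a) :: 'a fps)" if "j < n" for j
  proof -
    have "1 \<le> n - j"
      using that by simp
    then have "c \<le> c * (n - j)"
      using mult_le_mono2[of 1 "n - j" c] by simp
    moreover have "c * j + c * (n - j) = c * n"
      using that by (simp add: add_mult_distrib2[symmetric])
    ultimately have "c * j + (c * (n - j) - a) = c * n - a"
      using assms by linarith
    then show ?thesis
      by (simp add: algebra_simps power_add[symmetric])
  qed
  have "(\<Prod>j<n. fps_X ^ (c * n - a) + fps_X ^ (c * j))
      = (\<Prod>j<n. fps_X ^ (c * j)) * (\<Prod>j<n. 1 + fps_X ^ (c * (n - j) - a) :: 'a fps)"
    by (simp add: factor prod.distrib)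
  also have "(\<Prod>j<n. fps_X ^ (c * j)) = (fps_X :: 'a fps) ^ (c * (n choose 2))"
    by (simp add: power_sum[symmetric] sum_distrib_left[symmetric] sum_lessThan_choose_2)
  also have "(\<Prod>j<n. 1 + fps_X ^ (c * (n - j) - a))
      = (\<Prod>j\<in>{1..n}. 1 + (fps_X :: 'a fps) ^ (c * j - a))"
    by (rule prod.reindex_bij_witness[of _ "\<lambda>j. n - j" "\<lambda>j. n - j"]) auto
  finally show ?thesis .
qed

lemma prod_X_power_upper_half:
  assumes "a \<le> c * n"
  shows "(\<Prod>j\<in>{n..<2 * n}. fps_X ^ (c * n - a) + fps_X ^ (c * j))
       = fps_X ^ (n * (c * n - a)) * (\<Prod>t<n. 1 + fps_X ^ (a + c * t) :: 'a::comm_ring_1 fps)"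
proof -
  have factor: "fps_X ^ (c * n - a) + fps_X ^ (c * (t + n))
      = fps_X ^ (c * n - a) * (1 + fps_X ^ (a + c * t) :: 'a fps)" for t
  proof -
    have "c * n - a + (a + c * t) = c * (t + n)"
      using assms by (simp add: algebra_simps)
    then show ?thesis
      by (simp add: algebra_simps power_add[symmetric])
  qed
  have "(\<Prod>j\<in>{n..<2 * n}. fps_X ^ (c * n - a) + fps_X ^ (c * j))
      = (\<Prod>t<n. fps_X ^ (c * n - a) + fps_X ^ (c * (t + n)) :: 'a fps)"
    using prod.shift_bounds_nat_ivl[of "\<lambda>j. fps_X ^ (c * n - a) + fps_X ^ (c * j)" 0 n n]
    by (simp add: mult_2 atLeast0LessThan)
  then show ?thesis
    by (simp add: factor prod.distrib power_mult[symmetric] mult.commute)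
qed

lemma jtp_prod_mult_X_power:
  assumes "a < c" "n > 0"
  shows "(\<Prod>j<2 * n. fps_X ^ (c * n - a) + fps_X ^ (c * j))
       = fps_X ^ (c * (n choose 2) + n * (c * n - a)) * (jtp_prod c a n :: 'a::comm_ring_1 fps)"
proof -
  have "c \<le> c * n"
    using assms(2) by simp
  then have "a \<le> c * n"
    using assms(1) by linarith
  have "(\<Prod>j<2 * n. fps_X ^ (c * n - a) + fps_X ^ (c * j))
      = (\<Prod>j<n. fps_X ^ (c * n - a) + fps_X ^ (c * j))
        * (\<Prod>j\<in>{n..<2 * n}. fps_X ^ (c * n - a) + fps_X ^ (c * j) :: 'a fps)"
    by (subst prod.union_disjoint[symmetric]) (auto intro!: prod.cong)
  also have "\<dots> = fps_X ^ (c * (n choose 2) + n * (c * n - a)) * jtp_prod c a n"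
    unfolding prod_X_power_lower_half[OF assms(1)] prod_X_power_upper_half[OF \<open>a \<le> c * n\<close>]
      jtp_prod_def
    by (simp add: power_add mult_ac)
  finally show ?thesis .
qed

lemma jtp_prod_expansion:
  assumes "a < c" "n > 0"
  shows "jtp_prod c a n
       = (\<Sum>i\<le>2 * n. qbinomial (fps_X ^ c) (2 * n) i * fps_X ^ nat (theta_exp c a (int i - int n))
           :: 'a::idom fps)"
proof -
  define S where "S = c * (n choose 2) + n * (c * n - a)"
  have "fps_X ^ S * jtp_prod c a n = (\<Prod>j<2 * n. fps_X ^ (c * n - a) + fps_X ^ (c * j) :: 'a fps)"
    unfolding S_def by (rule jtp_prod_mult_X_power[OF assms, symmetric])
  also have "\<dots> = (\<Prod>j<2 * n. fps_X ^ (c * n - a) + 1 * (fps_X ^ c) ^ j)"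
    by (simp add: power_mult)
  also have "\<dots> = (\<Sum>i\<le>2 * n. qbinomial (fps_X ^ c) (2 * n) i * (fps_X ^ c) ^ (i choose 2) * 1 ^ i
      * (fps_X ^ (c * n - a)) ^ (2 * n - i))"
    by (rule qbinomial_theorem)
  also have "\<dots> = fps_X ^ S * (\<Sum>i\<le>2 * n. qbinomial (fps_X ^ c) (2 * n) i
      * fps_X ^ nat (theta_exp c a (int i - int n)))"
    unfolding sum_distrib_left
  proof (rule sum.cong)
    fix i assume "i \<in> {..2 * n}"
    then have "c * (i choose 2) + (c * n - a) * (2 * n - i) = S + nat (theta_exp c a (int i - int n))"
      unfolding S_def using assms by (intro theta_exp_reindex) auto
    then show "qbinomial (fps_X ^ c) (2 * n) i * (fps_X ^ c) ^ (i choose 2) * 1 ^ i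
        * (fps_X ^ (c * n - a)) ^ (2 * n - i)
        = fps_X ^ S * (qbinomial (fps_X ^ c) (2 * n) i
            * (fps_X :: 'a fps) ^ nat (theta_exp c a (int i - int n)))"
      by (simp add: power_mult[symmetric] power_add[symmetric] mult_ac)
  qed simp
  finally show ?thesis
    by simp
qed

definition theta_series :: "nat \<Rightarrow> nat \<Rightarrow> 'a::semiring_1 fps" where
  "theta_series c a = Abs_fps (\<lambda>n. of_nat (card {k::int. theta_exp c a k = int n}))"

lemma qbinomial_f_fps_agree_one:
  assumes "c > 0" "i \<le> N" "m \<le> i" "m \<le> N - i"
  shows "fps_agree m (qbinomial (fps_X ^ c) N i * f_fps c) 1"
proof -
  let ?B = "qbinomial (fps_X ^ c) N i"
  have "fps_agree m (?B * f_fps c * f_fps c) (?B * euler_prod c i * euler_prod c (N - i))"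
    using assms by (intro fps_agree_mult fps_agree_refl f_fps_agree_euler_prod)
  also have "?B * euler_prod c i * euler_prod c (N - i) = euler_prod c N"
    using qbinomial_qpoch[OF assms(2), of "fps_X ^ c"] by (simp add: qpoch_X_power)
  also have "fps_agree m \<dots> (f_fps c)"
    using assms by (intro fps_agree_sym[OF f_fps_agree_euler_prod]) auto
  finally have "fps_agree m (?B * f_fps c * f_fps c * inverse (f_fps c)) (f_fps c * inverse (f_fps c))"
    by (rule fps_agree_mult) simp
  then show ?thesis
    by (simp add: inverse_mult_eq_1' mult.assoc)
qed

text \<open>Either the monomial has degree above \<open>m\<close>, or \<open>i\<close> is far from both ends of
  \<open>{0..2 n}\<close> and the Gaussian binomial coefficient is \<open>1 / f\<^sub>c\<close> up to degree \<open>m\<close>.\<close>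

lemma jtp_term_agree:
  assumes "a < c" "2 * m + 2 \<le> n" "i \<le> 2 * n"
  defines "e \<equiv> nat (theta_exp c a (int i - int n))"
  shows "fps_agree m (qbinomial (fps_X ^ c) (2 * n) i * f_fps c * fps_X ^ e) (fps_X ^ e)"
proof (cases "m < e")
  case True
  then have "fps_agree m (fps_X ^ e * (qbinomial (fps_X ^ c) (2 * n) i * f_fps c)) (fps_X ^ e * 1)"
    using fps_agree_trans[OF fps_agree_X_power_mult fps_agree_sym[OF fps_agree_X_power_mult]] by blast
  then show ?thesis
    by (simp add: mult.commute)
next
  case False
  have "\<bar>int i - int n\<bar> \<le> int m + 1"
    using theta_exp_bounds[OF assms(1), of "int i - int n"] False unfolding e_def by linarith
  then have "m \<le> i" "m \<le> 2 * n - i"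
    using assms(2,3) by linarith+
  then have "fps_agree m (qbinomial (fps_X ^ c) (2 * n) i * f_fps c) 1"
    using assms by (intro qbinomial_f_fps_agree_one) auto
  then show ?thesis
    using fps_agree_mult[OF _ fps_agree_refl[of m "fps_X ^ e"]] by fastforce
qed

lemma sum_X_power_nth:
  "finite A \<Longrightarrow> (\<Sum>i\<in>A. fps_X ^ g i :: 'a::comm_semiring_1 fps) $ j = of_nat (card {i\<in>A. g i = j})"
  by (simp add: fps_sum_nth sum.If_cases Int_def eq_commute conj_commute)

lemma card_theta_exp_window:
  assumes "a < c" "j < n"
  shows "card {i\<in>{..2 * n}. nat (theta_exp c a (int i - int n)) = j}
       = card {k. theta_exp c a k = int j}"
proof (rule bij_betw_same_card[of "\<lambda>i. int i - int n"],
    rule bij_betw_byWitness[where f' = "\<lambda>k. nat (k + int n)"])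
  have small: "\<bar>k\<bar> \<le> int n" if "theta_exp c a k = int j" for k
    using theta_exp_bounds(2)[OF assms(1), of k] that assms(2) by linarith
  show "\<forall>i\<in>{i\<in>{..2 * n}. nat (theta_exp c a (int i - int n)) = j}. nat (int i - int n + int n) = i"
    by auto
  show "\<forall>k\<in>{k. theta_exp c a k = int j}. int (nat (k + int n)) - int n = k"
    using small by fastforce
  show "(\<lambda>i. int i - int n) ` {i\<in>{..2 * n}. nat (theta_exp c a (int i - int n)) = j}
      \<subseteq> {k. theta_exp c a k = int j}"
    using theta_exp_bounds(1)[OF assms(1)] by auto
  show "(\<lambda>k. nat (k + int n)) ` {k. theta_exp c a k = int j}
      \<subseteq> {i\<in>{..2 * n}. nat (theta_exp c a (int i - int n)) = j}"
  proof clarify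
    fix k assume k: "theta_exp c a k = int j"
    then have "\<bar>k\<bar> \<le> int n"
      by (rule small)
    with k show "nat (k + int n) \<in> {..2 * n} \<and> nat (theta_exp c a (int (nat (k + int n)) - int n)) = j"
      by auto
  qed
qed

lemma jtp_prod_agree_theta_series:
  assumes "a < c" "2 * m + 2 \<le> n"
  shows "fps_agree m (jtp_prod c a n * f_fps c) (theta_series c a)"
proof -
  define e where "e i = nat (theta_exp c a (int i - int n))" for i
  have "jtp_prod c a n * f_fps c = (\<Sum>i\<le>2 * n. qbinomial (fps_X ^ c) (2 * n) i * f_fps c * fps_X ^ e i)"
    using assms by (simp add: jtp_prod_expansion e_def sum_distrib_left sum_distrib_right mult_ac)
  also have "fps_agree m \<dots> (\<Sum>i\<le>2 * n. fps_X ^ e i)"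
    using assms unfolding e_def by (intro fps_agree_sum jtp_term_agree) auto
  also have "fps_agree m \<dots> (theta_series c a)"
    unfolding fps_agree_def
  proof (intro allI impI)
    fix j assume "j \<le> m"
    then have "card {i\<in>{..2 * n}. e i = j} = card {k. theta_exp c a k = int j}"
      unfolding e_def using assms by (intro card_theta_exp_window) auto
    then show "(\<Sum>i\<le>2 * n. fps_X ^ e i :: rat fps) $ j = theta_series c a $ j"
      by (simp add: sum_X_power_nth theta_series_def)
  qed
  finally show ?thesis .
qed

section \<open>The 3-dissection of $\psi$\<close>

definition psi :: "rat fps" where
  "psi = f_fps 2 ^ 2 * inverse (f_fps 1)"

lemma jtp_prod_1_0: "jtp_prod 1 0 (Suc n) = 2 * euler_prod_plus 1 n * euler_prod_plus 1 (Suc n)"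
proof -
  have "(\<Prod>t<Suc n. 1 + fps_X ^ (0 + 1 * t)) = (1 + fps_X ^ 0) * (\<Prod>t<n. 1 + (fps_X :: 'a fps) ^ Suc t)"
    by (simp only: prod.lessThan_Suc_shift) simp
  then have "(\<Prod>t<Suc n. 1 + fps_X ^ (0 + 1 * t)) = 2 * (euler_prod_plus 1 n :: 'a fps)"
    by (simp add: euler_prod_plus_lessThan)
  then show ?thesis
    unfolding jtp_prod_def by (simp add: euler_prod_plus_def)
qed

lemma theta_series_1_0: "theta_series 1 0 = 2 * psi"
proof (rule fps_eq_if_agree)
  fix m :: nat
  define n where "n = 2 * m + 2"
  have "fps_agree m (theta_series 1 0) (jtp_prod 1 0 (Suc n) * f_fps 1)"
    by (rule fps_agree_sym, rule jtp_prod_agree_theta_series) (simp_all add: n_def)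
  also have "jtp_prod 1 0 (Suc n) * f_fps 1
      = 2 * euler_prod_plus 1 n * euler_prod_plus 1 (Suc n) * f_fps 1"
    by (simp only: jtp_prod_1_0)
  also have "fps_agree m \<dots> (2 * (f_fps 2 * inverse (f_fps 1)) * (f_fps 2 * inverse (f_fps 1)) * f_fps 1)"
    using euler_prod_plus_agree[of 1 m n] euler_prod_plus_agree[of 1 m "Suc n"]
    by (intro fps_agree_mult fps_agree_refl) (simp_all add: n_def)
  also have "2 * (f_fps 2 * inverse (f_fps 1)) * (f_fps 2 * inverse (f_fps 1)) * f_fps 1 = 2 * psi"
    using inverse_mult_eq_1[of "f_fps 1"] by (simp add: psi_def power2_eq_square mult_ac)
  finally show "fps_agree m (theta_series 1 0) (2 * psi)" .
qed

lemma jtp_prod_3_1: "jtp_prod 3 1 n * euler_prod_plus 3 n = euler_prod_plus 1 (3 * n)"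
proof -
  have "(\<Prod>j\<in>{1..n}. 1 + fps_X ^ (3 * j - 1)) = (\<Prod>t<n. 1 + (fps_X :: 'a fps) ^ (3 * t + 2))"
    using prod.atLeast1_atMost_eq[of "\<lambda>j. 1 + (fps_X :: 'a fps) ^ (3 * j - 1)" n] by simp
  moreover have "euler_prod_plus 3 n = (\<Prod>t<n. 1 + (fps_X :: 'a fps) ^ (3 * t + 3))"
    unfolding euler_prod_plus_lessThan by (simp add: algebra_simps)
  moreover have "euler_prod_plus 1 (3 * n)
      = (\<Prod>t<n. (1 + fps_X ^ (3 * t + 1)) * (1 + fps_X ^ (3 * t + 2))
          * (1 + (fps_X :: 'a fps) ^ (3 * t + 3)))"
    unfolding euler_prod_plus_def prod_group3 by simp
  ultimately show ?thesis
    unfolding jtp_prod_def prod.distrib by (simp add: add.commute)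
qed

lemma theta_series_3_1: "theta_series 3 1 = f_fps 2 * f_fps 3 ^ 2 * inverse (f_fps 1 * f_fps 6)"
proof (rule fps_eq_if_agree)
  fix m :: nat
  define n where "n = 2 * m + 2"
  have "fps_agree m (theta_series 3 1) (jtp_prod 3 1 n * f_fps 3)"
    by (rule fps_agree_sym, rule jtp_prod_agree_theta_series) (simp_all add: n_def)
  also have "jtp_prod 3 1 n = euler_prod_plus 1 (3 * n) * inverse (euler_prod_plus 3 n :: rat fps)"
    by (intro fps_eq_mult_inverse jtp_prod_3_1) simp
  also have "fps_agree m (euler_prod_plus 1 (3 * n) * inverse (euler_prod_plus 3 n) * f_fps 3)
      ((f_fps 2 * inverse (f_fps 1)) * inverse (f_fps 6 * inverse (f_fps 3)) * f_fps 3)"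
  proof (intro fps_agree_mult fps_agree_refl)
    show "fps_agree m (euler_prod_plus 1 (3 * n)) (f_fps 2 * inverse (f_fps 1))"
      using euler_prod_plus_agree[of 1 m "3 * n"] by (simp add: n_def)
    show "fps_agree m (inverse (euler_prod_plus 3 n)) (inverse (f_fps 6 * inverse (f_fps 3)))"
      using euler_prod_plus_agree[of 3 m n]
      by (intro fps_agree_inverse) (simp_all add: n_def)
  qed
  also have "(f_fps 2 * inverse (f_fps 1)) * inverse (f_fps 6 * inverse (f_fps 3)) * f_fps 3
      = f_fps 2 * f_fps 3 ^ 2 * inverse (f_fps 1 * f_fps 6)"
    by (simp add: fps_inverse_mult power2_eq_square mult_ac)
  finally show "fps_agree m (theta_series 3 1) (f_fps 2 * f_fps 3 ^ 2 * inverse (f_fps 1 * f_fps 6))" .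
qed

lemma times_pred_mod3: "(k * (k - 1)) mod 3 = (if k mod 3 = 2 then 2 else (0::int))"
proof -
  define q r where "q = k div 3" and "r = k mod 3"
  have k: "k = 3 * q + r"
    unfolding q_def r_def by simp
  have r: "r = 0 \<or> r = 1 \<or> r = 2"
    unfolding r_def by presburger
  have "k * (k - 1) = 3 * (q * (3 * q + 2 * r - 1)) + r * (r - 1)"
    unfolding k by (simp add: algebra_simps)
  then have "(k * (k - 1)) mod 3 = (r * (r - 1)) mod 3"
    by simp
  then show ?thesis
    using r unfolding r_def[symmetric] by auto
qed

lemma theta_exp_1_0_eq_iff: "theta_exp 1 0 k = int n \<longleftrightarrow> k * (k - 1) = 2 * int n"
  using theta_exp_double[of 1 0 k] by auto

lemma theta_exp_3_1_eq_iff: "theta_exp 3 1 k = int n \<longleftrightarrow> 3 * k * k - k = 2 * int n"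
  using theta_exp_double[of 3 1 k] by (auto simp: algebra_simps)

lemma finite_theta_exp_eq:
  assumes "a < c"
  shows "finite {k. theta_exp c a k = int n}"
proof (rule finite_subset)
  show "{k. theta_exp c a k = int n} \<subseteq> {- int n - 1 .. int n + 1}"
  proof
    fix k assume "k \<in> {k. theta_exp c a k = int n}"
    then have "\<bar>k\<bar> \<le> int n + 1"
      using theta_exp_bounds(2)[OF assms, of k] by simp
    then show "k \<in> {- int n - 1 .. int n + 1}"
      by (auto simp: abs_le_iff)
  qed
qed simp

lemma theta_exp_1_0_ne_2_mod3: "n mod 3 = 2 \<Longrightarrow> {k. theta_exp 1 0 k = int n} = {}"
  unfolding theta_exp_1_0_eq_iff
proof (rule equals0I)
  fix k assume "n mod 3 = 2" "k \<in> {k. k * (k - 1) = 2 * int n}"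
  moreover have "(2 * int n) mod 3 = 1"
    using \<open>n mod 3 = 2\<close> by presburger
  ultimately show False
    using times_pred_mod3[of k] by (simp split: if_splits)
qed

lemma theta_exp_1_0_triple:
  "{k. theta_exp 1 0 k = int (3 * n)}
     = (\<lambda>k. 3 * k) ` {k. theta_exp 3 1 k = int n} \<union> (\<lambda>k. 1 - 3 * k) ` {k. theta_exp 3 1 k = int n}"
  unfolding theta_exp_1_0_eq_iff theta_exp_3_1_eq_iff
proof (intro equalityI subsetI)
  fix k assume "k \<in> {k. k * (k - 1) = 2 * int (3 * n)}"
  then have kk: "k * (k - 1) = 6 * int n"
    by simp
  then have "k mod 3 \<noteq> 2"
    using times_pred_mod3[of k] by (simp split: if_splits)
  then have "k mod 3 = 0 \<or> k mod 3 = 1"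
    by presburger
  then show "k \<in> (\<lambda>k. 3 * k) ` {k. 3 * k * k - k = 2 * int n}
      \<union> (\<lambda>k. 1 - 3 * k) ` {k. 3 * k * k - k = 2 * int n}"
  proof
    assume "k mod 3 = 0"
    then obtain q where q: "k = 3 * q"
      by auto
    have "3 * q * q - q = 2 * int n"
      using kk unfolding q by (simp add: algebra_simps)
    then show ?thesis
      using q by auto
  next
    assume "k mod 3 = 1"
    then obtain q where q: "k = 1 - 3 * q"
      by (metis minus_mult_right mult_div_mod_eq add.commute diff_minus_eq_add)
    have "3 * q * q - q = 2 * int n"
      using kk unfolding q by (simp add: algebra_simps)
    then show ?thesis
      using q by auto
  qed
qed (auto simp: algebra_simps)

lemma card_theta_exp_1_0_triple:
  "card {k. theta_exp 1 0 k = int (3 * n)} = 2 * card {k. theta_exp 3 1 k = int n}"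
proof -
  let ?P = "{k. theta_exp 3 1 k = int n}"
  have "(\<lambda>k. 3 * k) ` ?P \<inter> (\<lambda>k. 1 - 3 * k) ` ?P = {}"
    by auto presburger
  moreover have "inj_on (\<lambda>k::int. 3 * k) ?P" "inj_on (\<lambda>k::int. 1 - 3 * k) ?P"
    by (auto simp: inj_on_def)
  ultimately show ?thesis
    unfolding theta_exp_1_0_triple
    by (subst card_Un_disjoint) (simp_all add: finite_theta_exp_eq card_image)
qed

lemma psi_nth: "psi $ n = of_nat (card {k. theta_exp 1 0 k = int n}) / 2"
proof -
  have "theta_series 1 0 $ n = 2 * psi $ n"
    unfolding theta_series_1_0 by (simp only: fps_numeral_fps_const fps_mult_left_const_nth)
  then show ?thesis
    unfolding theta_series_def by simp
qed

lemma trisect_2_psi: "trisect 2 psi = 0"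
proof (rule fps_ext)
  fix n
  show "trisect 2 psi $ n = 0 $ n"
  proof (cases "n mod 3 = 2")
    case True
    then have "psi $ n = 0"
      unfolding psi_nth theta_exp_1_0_ne_2_mod3[OF True] by simp
    then show ?thesis
      by (simp add: trisect_def)
  qed (simp add: trisect_def)
qed

lemma trisect_0_psi: "trisect 0 psi = fps_expand 3 (theta_series 3 1)"
proof (rule fps_ext)
  fix n
  show "trisect 0 psi $ n = fps_expand 3 (theta_series 3 1) $ n"
  proof (cases "3 dvd n")
    case True
    then obtain j where j: "n = 3 * j"
      by blast
    have "trisect 0 psi $ n = of_nat (card {k. theta_exp 1 0 k = int (3 * j)}) / 2"
      unfolding trisect_def psi_nth j by simp
    also have "\<dots> = theta_series 3 1 $ j"
      unfolding card_theta_exp_1_0_triple theta_series_def by simp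
    finally show ?thesis
      unfolding j by (simp add: fps_expand_nth)
  qed (simp add: trisect_def fps_expand_nth dvd_eq_mod_eq_0)
qed

section \<open>Extracting every third coefficient\<close>

text \<open>With \<open>psi = a + x\<close> its 3-dissection,
  \<open>1 / psi = (a\<^sup>2 - a x + x\<^sup>2) / (a\<^sup>3 + x\<^sup>3)\<close> and the denominator is the norm.\<close>

lemma trisect_0_inverse_psi:
  "trisect 0 (inverse psi) = fps_expand 3 (theta_series 3 1) ^ 2 * inverse (trinorm psi)"
proof -
  define a where "a = trisect 0 psi"
  define x where "x = trisect 1 psi"
  have a: "supp_mod3 0 a" and x: "supp_mod3 1 x"
    unfolding a_def x_def by (rule supp_mod3_trisect)+
  have psi0: "psi $ 0 \<noteq> 0"
    by (simp add: psi_def)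
  have psi: "psi = a + x"
    using trisect_sum[of psi] trisect_2_psi unfolding a_def x_def by simp
  have norm: "trinorm psi = a ^ 3 + x ^ 3"
    unfolding trinorm_def trisect_2_psi a_def[symmetric] x_def[symmetric] by simp
  have norm0: "trinorm psi $ 0 \<noteq> 0"
    using psi0 by (simp add: trinorm_nth_0)
  have "psi * (a * a - a * x + x * x) = trinorm psi"
    unfolding norm by (subst psi) (simp add: algebra_simps power3_eq_cube)
  then have "inverse psi = (a * a - a * x + x * x) * inverse (trinorm psi)"
    using psi0 norm0 by (metis fps_eq_mult_inverse mult.commute fps_inverse_mult)
  then have "trisect 0 (inverse psi) = inverse (trinorm psi) * trisect 0 (a * a - a * x + x * x)"
    by (simp add: mult.commute trisect_0_mult_supp_mod3_0 supp_mod3_inverse supp_mod3_trinorm norm0)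
  also have "trisect 0 (a * a - a * x + x * x) = a * a"
    using trisect_supp_mod3[OF supp_mod3_mult[OF a a], of 0]
      trisect_supp_mod3[OF supp_mod3_mult[OF a x], of 0]
      trisect_supp_mod3[OF supp_mod3_mult[OF x x], of 0]
    by (simp add: trisect_add trisect_diff)
  finally show ?thesis
    unfolding a_def trisect_0_psi by (simp add: power2_eq_square mult.commute)
qed

lemma inverse_trinorm_psi:
  "inverse (trinorm psi) = (inverse (f_fps 6) ^ 4 * f_fps 18) ^ 2 * (f_fps 3 ^ 4 * inverse (f_fps 9))"
proof -
  have norm: "trinorm (f_fps k) = f_fps (3 * k) ^ 4 * inverse (f_fps (9 * k))" if "\<not> 3 dvd k" for k
    using that by (intro fps_eq_mult_inverse trinorm_f_fps) simp_all
  have "trinorm psi = trinorm (f_fps 2) ^ 2 * inverse (trinorm (f_fps 1))"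
    by (simp add: psi_def trinorm_mult trinorm_power trinorm_inverse)
  then show ?thesis
    using norm[of 1] norm[of 2] by (simp add: fps_inverse_mult fps_inverse_power)
qed

lemma fps_extract_cube: "fps_extract 3 (f_fps 3 * inverse psi) = (f_fps 3 * inverse psi) ^ 3"
proof (rule fps_expand_inj[of 3])
  define u where "u k = f_fps k" for k
  define i where "i k = inverse (f_fps k)" for k
  have unit: "u k * i k = 1" for k
    unfolding u_def i_def by (simp add: inverse_mult_eq_1')
  have expand_u: "fps_expand 3 (u k) = u (3 * k)" if "k > 0" for k
    unfolding u_def using that by (simp add: fps_expand_f_fps)
  have expand_i: "fps_expand 3 (i k) = i (3 * k)" if "k > 0" for k
    unfolding i_def using that by (simp add: fps_expand_inverse fps_expand_f_fps)
  have inv_psi: "inverse psi = i 2 ^ 2 * u 1"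
    by (simp add: psi_def u_def i_def fps_inverse_mult fps_inverse_power)
  have inv_norm_psi: "inverse (trinorm psi) = (i 6 ^ 4 * u 18) ^ 2 * (u 3 ^ 4 * i 9)"
    unfolding inverse_trinorm_psi u_def i_def ..
  have supp_u3: "supp_mod3 0 (u 3)"
    using supp_mod3_fps_expand[of "u 1"] expand_u[of 1] by simp
  have "fps_expand 3 (fps_extract 3 (u 3 * inverse psi)) = u 3 * trisect 0 (inverse psi)"
    by (simp add: fps_expand_fps_extract trisect_0_mult_supp_mod3_0 supp_u3)
  also have "\<dots> = u 3 * (fps_expand 3 (f_fps 2 * f_fps 3 ^ 2 * inverse (f_fps 1 * f_fps 6)) ^ 2
      * inverse (trinorm psi))"
    by (simp only: trisect_0_inverse_psi theta_series_3_1)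
  also have "f_fps 2 * f_fps 3 ^ 2 * inverse (f_fps 1 * f_fps 6) = u 2 * u 3 ^ 2 * (i 1 * i 6)"
    by (simp add: u_def i_def fps_inverse_mult)
  also have "fps_expand 3 (u 2 * u 3 ^ 2 * (i 1 * i 6)) = u 6 * u 9 ^ 2 * (i 3 * i 18)"
    by (simp add: fps_expand_mult fps_expand_power expand_u expand_i)
  also have "u 3 * ((u 6 * u 9 ^ 2 * (i 3 * i 18)) ^ 2 * inverse (trinorm psi))
      = u 3 * (u 6 * u 9 ^ 2 * (i 3 * i 18)) ^ 2 * ((i 6 ^ 4 * u 18) ^ 2 * (u 3 ^ 4 * i 9))"
    unfolding inv_norm_psi by (simp only: mult.assoc)
  also have "\<dots> = (u 3 * u 9 * i 6 ^ 2) ^ 3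
      * ((u 3 * i 3) ^ 2 * (u 6 * i 6) ^ 2 * (u 9 * i 9) * (u 18 * i 18) ^ 2)"
    by (simp add: algebra_simps power2_eq_square power3_eq_cube power4_eq_xxxx)
  also have "\<dots> = fps_expand 3 ((u 3 * inverse psi) ^ 3)"
    unfolding unit inv_psi by (simp add: fps_expand_mult fps_expand_power expand_u expand_i mult_ac)
  finally show "fps_expand 3 (fps_extract 3 (f_fps 3 * inverse psi))
      = fps_expand 3 ((f_fps 3 * inverse psi) ^ 3)"
    by (simp add: u_def)
qed simp

lemma P_gen_eq_fps_neg_var: "P_gen = fps_neg_var (f_fps 3 * inverse psi)"
proof -
  have "fps_neg_var (f_fps 1) * f_fps 1 * f_fps 4 = f_fps 2 ^ 3"
    using fps_neg_var_f_fps_odd[of 1] by simp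
  then have neg1: "fps_neg_var (f_fps 1) = f_fps 2 ^ 3 * inverse (f_fps 1 * f_fps 4)"
    by (intro fps_eq_mult_inverse) (simp_all add: mult.assoc)
  have "fps_neg_var (f_fps 3) * f_fps 3 * f_fps 12 = f_fps 6 ^ 3"
    using fps_neg_var_f_fps_odd[of 3] by simp
  then have neg3: "fps_neg_var (f_fps 3) = f_fps 6 ^ 3 * inverse (f_fps 3 * f_fps 12)"
    by (intro fps_eq_mult_inverse) (simp_all add: mult.assoc)
  have neg2: "fps_neg_var (f_fps 2) = f_fps 2"
    by (rule fps_neg_var_f_fps_even) simp_all
  have "fps_neg_var (f_fps 3 * inverse psi)
      = fps_neg_var (f_fps 3) * fps_neg_var (f_fps 1) * inverse (fps_neg_var (f_fps 2)) ^ 2"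
    by (simp add: psi_def fps_neg_var_mult fps_neg_var_inverse fps_neg_var_power fps_inverse_mult
        fps_inverse_power)
  also have "\<dots> = (f_fps 2 * inverse (f_fps 2)) ^ 2 * P_gen"
    unfolding neg1 neg2 neg3 P_gen_def
    by (simp add: fps_inverse_mult power2_eq_square power3_eq_cube mult_ac)
  also have "\<dots> = P_gen"
    by (simp add: inverse_mult_eq_1')
  finally show ?thesis ..
qed

theorem theorem4p4:
  shows "convolutive 3 P"
proof -
  have "Abs_fps P = P_gen"
    by (rule fps_ext) (simp add: P_def)
  moreover have "Abs_fps (\<lambda>n. P (3 * n)) = fps_extract 3 P_gen"
    by (simp add: P_def fps_extract_def)
  ultimately show ?thesis
    unfolding convolutive_def P_gen_eq_fps_neg_var
    by (simp add: fps_extract_neg_var fps_extract_cube fps_neg_var_power)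
qed

end
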